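(* Let $F$ be a Banach lattice and $E$ a subspace of $F$. If $E$ is strongly dispersed, then $E$ is strictly dispersed.
   Context: Elements $x,y$ of a Banach lattice are disjoint if $|x|\wedge|y|=0$. $F^a$ denotes the closed ideal of order continuous elements of $F$. The una-topology on $F$ is the linear topology with zero neighborhood base $\{f\in F:\||f|\wedge h\|<\varepsilon\}$, $h\in F^a_+$, $\varepsilon>0$. $E$ is strongly dispersed if some una-neighborhood of $0_F$ is disjoint from the unit sphere $\mathrm{S}_E$ of $E$. $E$ is strictly dispersed if there is $\delta>0$ such that there is no disjoint sequence $(f_n)$ of norm-one elements of $F$ with $\mathrm{dist}(f_n,E)<\delta$ for all $n$. *)

theory Defs
  imports "HOL-Analysis.Analysis"
begin

class banach_lattice = banach + ordered_real_vector + lattice +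
  assumes lattice_norm_mono:
    "sup x (- x) \<le> sup y (- y) \<Longrightarrow> norm x \<le> norm y"

definition labs :: "'a::banach_lattice \<Rightarrow> 'a" where
  "labs x = sup x (- x)"

definition ldisjoint :: "'a::banach_lattice \<Rightarrow> 'a \<Rightarrow> bool" where
  "ldisjoint x y \<longleftrightarrow> inf (labs x) (labs y) = 0"

text \<open>x is order continuous: every net x_alpha with 0 <= x_alpha <= |x| and x_alpha decreasing
  to 0 converges to 0 in norm.  Decreasing nets are represented by their (nonempty,
  downward directed) range D, with inf D = 0; norm convergence of such a net is
  inf of the norms over D being 0 (norms are monotone on positive elements).\<close>
definition order_continuous :: "'a::banach_lattice \<Rightarrow> bool" where
  "order_continuous x \<longleftrightarrow>
     (\<forall>D. D \<noteq> {} \<and> D \<subseteq> {y. 0 \<le> y \<and> y \<le> labs x}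
        \<and> (\<forall>a\<in>D. \<forall>b\<in>D. \<exists>c\<in>D. c \<le> a \<and> c \<le> b)
        \<and> (\<forall>z. (\<forall>d\<in>D. z \<le> d) \<longrightarrow> z \<le> 0)
        \<longrightarrow> (\<forall>e>0. \<exists>d\<in>D. norm d < e))"

definition oc_part :: "'a::banach_lattice set" where
  "oc_part = {x. order_continuous x}"

definition una_nbhd :: "'a::banach_lattice \<Rightarrow> real \<Rightarrow> 'a set" where
  "una_nbhd h \<epsilon> = {f. norm (inf (labs f) h) < \<epsilon>}"

definition unit_sphere_of :: "'a::banach_lattice set \<Rightarrow> 'a set" where
  "unit_sphere_of E = {x \<in> E. norm x = 1}"

definition strongly_dispersed :: "'a::banach_lattice set \<Rightarrow> bool" where
  "strongly_dispersed E \<longleftrightarrow>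
     (\<exists>h \<epsilon>. h \<in> oc_part \<and> 0 \<le> h \<and> \<epsilon> > 0 \<and> una_nbhd h \<epsilon> \<inter> unit_sphere_of E = {})"

definition strictly_dispersed :: "'a::banach_lattice set \<Rightarrow> bool" where
  "strictly_dispersed E \<longleftrightarrow>
     (\<exists>\<delta>>0. \<not> (\<exists>f :: nat \<Rightarrow> 'a.
         (\<forall>n. norm (f n) = 1) \<and> (\<forall>n m. n \<noteq> m \<longrightarrow> ldisjoint (f n) (f m))
         \<and> (\<forall>n. infdist (f n) E < \<delta>)))"

end

theory Submission
  imports Defs "HOL-Library.Lattice_Algebras"
begin

text \<open>If \<open>E\<close> avoids the una-neighbourhood \<open>{f. \<parallel>|f| \<and> h\<parallel> < \<epsilon>}\<close>, every unit vector
  \<open>\<delta>\<close>-close to \<open>E\<close> (with \<open>\<delta>\<close> small) is close to a point of the unit sphere of \<open>E\<close> and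
  therefore satisfies \<open>\<parallel>|f| \<and> h\<parallel> \<ge> \<epsilon>/2\<close>.  For a disjoint sequence \<open>(f\<^sub>n)\<close> the
  elements \<open>|f\<^sub>n| \<and> h\<close> are disjoint and lie in \<open>[0,h]\<close>; their partial sums increase
  inside \<open>[0,h]\<close>, and order continuity of \<open>h\<close> makes such sequences norm Cauchy,
  so \<open>\<parallel>|f\<^sub>n| \<and> h\<parallel> \<rightarrow> 0\<close>, a contradiction.\<close>

subclass (in banach_lattice) lattice_ab_group_add ..

lemma labs_nonneg: "0 \<le> labs (x::'a::banach_lattice)"
proof -
  have "x \<le> labs x" "- x \<le> labs x" by (auto simp: labs_def)
  then have "x + - x \<le> labs x + labs x" by (rule add_mono)
  then show ?thesis by simp
qed

lemma labs_of_nonneg: "0 \<le> (x::'a::banach_lattice) \<Longrightarrow> labs x = x"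
  unfolding labs_def by (metis neg_le_0_iff_le order_trans sup.absorb1)

lemma labs_le_iff: "labs (x::'a::banach_lattice) \<le> y \<longleftrightarrow> x \<le> y \<and> - x \<le> y"
  by (simp add: labs_def)

lemma norm_mono_nonneg:
  fixes a b :: "'a::banach_lattice"
  assumes "0 \<le> a" "a \<le> b"
  shows "norm a \<le> norm b"
proof (rule lattice_norm_mono)
  show "sup a (- a) \<le> sup b (- b)"
    using labs_of_nonneg[of a] labs_of_nonneg[of b] assms unfolding labs_def by simp
qed

lemma norm_labs: "norm (labs (x::'a::banach_lattice)) = norm x"
proof -
  have "sup (labs x) (- labs x) = sup x (- x)"
    using labs_of_nonneg[OF labs_nonneg] unfolding labs_def by simp
  then show ?thesis using lattice_norm_mono[of x "labs x"] lattice_norm_mono[of "labs x" x] by simp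
qed

lemma norm_le_if_labs_le:
  fixes x b :: "'a::banach_lattice"
  assumes "labs x \<le> b"
  shows "norm x \<le> norm b"
  using norm_mono_nonneg[OF labs_nonneg assms] by (simp add: norm_labs)

lemma labs_add_le: "labs ((x::'a::banach_lattice) + y) \<le> labs x + labs y"
proof -
  have "x \<le> labs x" "- x \<le> labs x" "y \<le> labs y" "- y \<le> labs y" by (auto simp: labs_def)
  then have "x + y \<le> labs x + labs y" "- x + - y \<le> labs x + labs y"
    by (simp_all only: add_mono)
  moreover have "- (x + y) = - x + - y" by simp
  ultimately show ?thesis by (simp only: labs_le_iff)
qed

lemma inf_add_nonneg_le:
  fixes x y h :: "'a::banach_lattice"
  assumes "0 \<le> y"
  shows "inf (x + y) h \<le> inf x h + y"
proof -
  have "inf x h + y = inf (x + y) (h + y)" by (rule add_inf_distrib_right)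
  moreover have "h \<le> h + y" using assms by simp
  ultimately show ?thesis by (metis inf_mono order_refl)
qed

lemma inf_add_le_add_inf:
  fixes a b c :: "'a::banach_lattice"
  assumes "0 \<le> a" "0 \<le> b" "0 \<le> c"
  shows "inf (a + b) c \<le> inf a c + inf b c"
proof -
  define x where "x = inf (a + b) c"
  have "x - inf a c = sup (x - a) (x - c)"
    by (simp add: add_sup_distrib_left)
  also have "\<dots> \<le> b"
  proof (rule sup_least)
    show "x - a \<le> b" unfolding x_def by (simp add: algebra_simps le_infI1)
    have "x - c \<le> 0" unfolding x_def by simp
    then show "x - c \<le> b" using assms(2) by (rule order_trans)
  qed
  finally have "x - inf a c \<le> b" .
  moreover have "x - inf a c \<le> c"
  proof -
    have "x - inf a c \<le> x" using assms by simp
    also have "x \<le> c" unfolding x_def by simp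
    finally show ?thesis .
  qed
  ultimately have "x - inf a c \<le> inf b c" by (rule le_infI)
  then have "x \<le> inf b c + inf a c" by (simp only: diff_le_eq)
  then show ?thesis unfolding x_def by (simp only: add.commute)
qed

lemma nonneg_eq_0_if_multiples_bounded:
  fixes z w :: "'a::banach_lattice"
  assumes "0 \<le> z" "\<And>k::nat. of_nat k *\<^sub>R z \<le> w"
  shows "z = 0"
proof -
  have "real k * norm z \<le> norm w" for k :: nat
    using norm_mono_nonneg[OF _ assms(2)[of k]] assms(1) by (simp add: scaleR_nonneg_nonneg)
  then have "norm z = 0"
    by (metis norm_ge_zero reals_Archimedean3 linorder_not_le order.not_eq_order_implies_strict)
  then show ?thesis by simp
qed

text \<open>For an increasing sequence \<open>s\<close> below \<open>h\<close>, the differences \<open>u - s n\<close> with \<open>u\<close> an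
  upper bound of \<open>s\<close> below \<open>h\<close> form a net decreasing to \<open>0\<close>.\<close>

definition upper_bound_gaps :: "(nat \<Rightarrow> 'a::banach_lattice) \<Rightarrow> 'a \<Rightarrow> 'a set" where
  "upper_bound_gaps s h = {u - s n | u n. u \<le> h \<and> (\<forall>k. s k \<le> u)}"

lemma upper_bound_gaps_downward_directed:
  fixes s :: "nat \<Rightarrow> 'a::banach_lattice"
  assumes "incseq s" "a \<in> upper_bound_gaps s h" "b \<in> upper_bound_gaps s h"
  shows "\<exists>c\<in>upper_bound_gaps s h. c \<le> a \<and> c \<le> b"
proof -
  obtain u n u' n' where a: "a = u - s n" "u \<le> h" "\<forall>k. s k \<le> u"
    and b: "b = u' - s n'" "u' \<le> h" "\<forall>k. s k \<le> u'"
    using assms(2,3) by (auto simp: upper_bound_gaps_def)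
  define c where "c = inf u u' - s (max n n')"
  have "inf u u' \<le> h" "\<forall>k. s k \<le> inf u u'" using a b by (auto intro: le_infI1)
  then have "c \<in> upper_bound_gaps s h" unfolding c_def upper_bound_gaps_def by blast
  moreover have "c \<le> a" "c \<le> b"
    using a b assms(1) unfolding c_def incseq_def by (auto intro!: diff_mono)
  ultimately show ?thesis by blast
qed

lemma upper_bound_gaps_lower_bound_nonpos:
  fixes s :: "nat \<Rightarrow> 'a::banach_lattice"
  assumes s0: "\<And>n. 0 \<le> s n" and sh: "\<And>n. s n \<le> h"
    and zD: "\<And>d. d \<in> upper_bound_gaps s h \<Longrightarrow> z \<le> d"
  shows "z \<le> 0"
proof -
  define U where "U = {u. u \<le> h \<and> (\<forall>k. s k \<le> u)}"
  define p where "p = sup z 0"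
  have p0: "0 \<le> p" by (simp add: p_def)
  have shift: "u - p \<in> U" if "u \<in> U" for u
  proof -
    have "p \<le> u - s n" for n
      using zD[of "u - s n"] that by (auto simp: p_def U_def upper_bound_gaps_def)
    then have "s n \<le> u - p" for n by (simp add: algebra_simps)
    moreover have "u - p \<le> h" using that p0 by (auto simp: U_def intro: order_trans[of _ u])
    ultimately show ?thesis by (simp add: U_def)
  qed
  have "h - of_nat k *\<^sub>R p \<in> U" for k
  proof (induction k)
    case 0
    show ?case using sh by (simp add: U_def)
  next
    case (Suc k)
    then show ?case using shift[OF Suc] by (simp add: algebra_simps)
  qed
  then have "s 0 + of_nat k *\<^sub>R p \<le> h" for k by (simp add: U_def le_diff_eq)
  then have "of_nat k *\<^sub>R p \<le> h" for k using s0[of 0] by (metis add_increasing order_refl order_trans)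
  then have "p = 0" by (rule nonneg_eq_0_if_multiples_bounded[OF p0])
  then show ?thesis unfolding p_def by (metis sup.cobounded1)
qed

lemma order_continuous_incseq_Cauchy:
  fixes s :: "nat \<Rightarrow> 'a::banach_lattice"
  assumes oc: "order_continuous h" and inc: "incseq s"
    and s0: "\<And>n. 0 \<le> s n" and sh: "\<And>n. s n \<le> h"
  shows "Cauchy s"
proof (rule metric_CauchyI)
  fix e :: real assume "e > 0"
  let ?D = "upper_bound_gaps s h"
  have "labs h = h" using s0[of 0] sh[of 0] by (auto intro: labs_of_nonneg)
  moreover have "u - s n \<le> h" if "u \<le> h" for u n
    using s0[of n] that by (simp add: diff_le_eq add_increasing2)
  ultimately have sub: "?D \<subseteq> {y. 0 \<le> y \<and> y \<le> labs h}"
    by (auto simp: upper_bound_gaps_def)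
  have nonempty: "?D \<noteq> {}" using sh by (auto simp: upper_bound_gaps_def)
  have directed: "\<forall>a\<in>?D. \<forall>b\<in>?D. \<exists>c\<in>?D. c \<le> a \<and> c \<le> b"
    using upper_bound_gaps_downward_directed[OF inc] by blast
  have inf_0: "\<forall>z. (\<forall>d\<in>?D. z \<le> d) \<longrightarrow> z \<le> 0"
    using upper_bound_gaps_lower_bound_nonpos[of s h, OF s0 sh] by blast
  obtain d where "d \<in> ?D" "norm d < e"
    using oc[unfolded order_continuous_def, rule_format, OF conjI[OF nonempty conjI[OF sub
          conjI[OF directed inf_0]]] \<open>e > 0\<close>] by blast
  then obtain u N where d: "d = u - s N" and u: "\<forall>k. s k \<le> u"
    by (auto simp: upper_bound_gaps_def)
  have "dist (s m) (s n) < e" if "m \<ge> N" "n \<ge> N" for m n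
  proof -
    have "s m - s n \<le> u - s N" "s n - s m \<le> u - s N"
      using u inc that unfolding incseq_def by (simp_all add: diff_mono)
    then have "norm (s m - s n) \<le> norm (u - s N)"
      by (intro norm_le_if_labs_le) (simp add: labs_le_iff)
    then show ?thesis using \<open>norm d < e\<close> d by (simp add: dist_norm)
  qed
  then show "\<exists>N. \<forall>m\<ge>N. \<forall>n\<ge>N. dist (s m) (s n) < e" by blast
qed

lemma disjoint_partial_sums_le:
  fixes g :: "nat \<Rightarrow> 'a::banach_lattice"
  assumes g0: "\<And>n. 0 \<le> g n" and gh: "\<And>n. g n \<le> h"
    and dj: "\<And>n m. n \<noteq> m \<Longrightarrow> inf (g n) (g m) = 0"
  shows "(\<Sum>k<n. g k) \<le> h"
proof -
  let ?s = "\<lambda>n. \<Sum>k<n. g k"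
  have s0: "0 \<le> ?s n" for n by (simp add: g0 sum_nonneg)
  \<comment> \<open>a sum of disjoint positive elements is their supremum\<close>
  have "?s n \<le> h \<and> (\<forall>m\<ge>n. inf (?s n) (g m) = 0)"
  proof (induction n)
    case 0
    show ?case using order_trans[OF g0[of 0] gh[of 0]] g0 by (simp add: inf_absorb1)
  next
    case (Suc n)
    then have dn: "inf (?s n) (g n) = 0" by simp
    have "?s (Suc n) = sup (?s n) (g n) + inf (?s n) (g n)"
      using add_eq_inf_sup[of "?s n" "g n"] by (simp add: add.commute)
    then have "?s (Suc n) \<le> h" using Suc gh dn by simp
    moreover have "inf (?s (Suc n)) (g m) = 0" if "m \<ge> Suc n" for m
    proof (rule antisym)
      have "inf (?s n + g n) (g m) \<le> inf (?s n) (g m) + inf (g n) (g m)"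
        by (rule inf_add_le_add_inf) (auto simp: s0 g0)
      then show "inf (?s (Suc n)) (g m) \<le> 0" using Suc that dj[of n m] by simp
      show "0 \<le> inf (?s (Suc n)) (g m)" using s0 g0 by simp
    qed
    ultimately show ?case by simp
  qed
  then show ?thesis by simp
qed

lemma disjoint_order_interval_tendsto_0:
  fixes g :: "nat \<Rightarrow> 'a::banach_lattice"
  assumes oc: "order_continuous h" and g0: "\<And>n. 0 \<le> g n" and gh: "\<And>n. g n \<le> h"
    and dj: "\<And>n m. n \<noteq> m \<Longrightarrow> inf (g n) (g m) = 0"
  shows "g \<longlonglongrightarrow> 0"
proof -
  define s where "s n = (\<Sum>k<n. g k)" for n
  have "incseq s" unfolding s_def by (rule incseq_SucI) (simp add: g0)
  moreover have "0 \<le> s n" "s n \<le> h" for n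
    unfolding s_def using disjoint_partial_sums_le[OF g0 gh dj] by (auto simp: g0 sum_nonneg)
  ultimately have "Cauchy s" using oc by (intro order_continuous_incseq_Cauchy)
  then obtain L where "s \<longlonglongrightarrow> L" by (auto simp: Cauchy_convergent_iff convergent_def)
  then have "(\<lambda>n. s (Suc n) - s n) \<longlonglongrightarrow> L - L"
    by (intro tendsto_diff LIMSEQ_Suc)
  then show ?thesis by (simp add: s_def)
qed

lemma unit_sphere_point_near:
  fixes E :: "'a::banach_lattice set"
  assumes "subspace E" "norm f = 1" "infdist f E < \<delta>" "\<delta> \<le> 1/2"
  shows "\<exists>y\<in>unit_sphere_of E. norm (y - f) < 2 * \<delta>"
proof -
  have "0 \<in> E" using assms(1) by (rule subspace_0)
  then have "(INF a\<in>E. dist f a) < \<delta>" using assms(3) by (subst (asm) infdist_notempty) auto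
  then obtain x where xE: "x \<in> E" and dx: "dist f x < \<delta>"
    using \<open>0 \<in> E\<close> by (subst (asm) cINF_less_iff) auto
  have nx: "\<bar>1 - norm x\<bar> < \<delta>"
    using dx assms(2) norm_triangle_ineq3[of f x] by (simp add: dist_norm)
  then have xpos: "norm x > 0" using assms(4) by linarith
  define y where "y = (1 / norm x) *\<^sub>R x"
  have "y \<in> unit_sphere_of E"
    using assms(1) xE xpos by (simp add: y_def subspace_scale unit_sphere_of_def)
  moreover have "norm (y - x) < \<delta>"
  proof -
    have "y - x = (1 / norm x - 1) *\<^sub>R x" by (simp add: y_def algebra_simps)
    then have "norm (y - x) = \<bar>(1 / norm x - 1) * norm x\<bar>" by (simp add: abs_mult)
    also have "(1 / norm x - 1) * norm x = 1 - norm x" using xpos by (simp add: field_simps)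
    finally show ?thesis using nx by simp
  qed
  then have "norm (y - f) < 2 * \<delta>"
    using norm_triangle_ineq[of "y - x" "x - f"] dx by (simp add: dist_norm norm_minus_commute)
  ultimately show ?thesis by blast
qed

lemma norm_inf_labs_le:
  fixes f y h :: "'a::banach_lattice"
  assumes "0 \<le> h"
  shows "norm (inf (labs y) h) \<le> norm (inf (labs f) h) + norm (y - f)"
proof -
  have "inf (labs y) h \<le> inf (labs f + labs (y - f)) h"
    using labs_add_le[of f "y - f"] by (simp add: le_infI1)
  also have "\<dots> \<le> inf (labs f) h + labs (y - f)"
    by (rule inf_add_nonneg_le[OF labs_nonneg])
  finally have "norm (inf (labs y) h) \<le> norm (inf (labs f) h + labs (y - f))"
    using labs_nonneg assms by (intro norm_mono_nonneg) auto
  also have "\<dots> \<le> norm (inf (labs f) h) + norm (labs (y - f))" by (rule norm_triangle_ineq)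
  finally show ?thesis by (simp add: norm_labs)
qed

lemma norm_inf_labs_ge_if_near_dispersed:
  fixes E :: "'a::banach_lattice set"
  assumes "subspace E" and avoid: "una_nbhd h \<epsilon> \<inter> unit_sphere_of E = {}" and "0 \<le> h"
    and "norm f = 1" "infdist f E < \<delta>" "\<delta> \<le> \<epsilon> / 4" "\<delta> \<le> 1/2"
  shows "\<epsilon> / 2 \<le> norm (inf (labs f) h)"
proof -
  obtain y where "y \<in> unit_sphere_of E" and y_near: "norm (y - f) < 2 * \<delta>"
    using unit_sphere_point_near assms by blast
  then have "y \<notin> una_nbhd h \<epsilon>" using avoid by blast
  then have "\<epsilon> \<le> norm (inf (labs y) h)" by (simp add: una_nbhd_def)
  then show ?thesis using norm_inf_labs_le[OF \<open>0 \<le> h\<close>, of y f] y_near assms(6) by simp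
qed

lemma ldisjoint_inf_labs:
  fixes x y h :: "'a::banach_lattice"
  assumes "ldisjoint x y" "0 \<le> h"
  shows "inf (inf (labs x) h) (inf (labs y) h) = 0"
proof (rule antisym)
  have "inf (inf (labs x) h) (inf (labs y) h) \<le> inf (labs x) (labs y)"
    by (rule inf_mono) (rule inf.cobounded1)+
  then show "inf (inf (labs x) h) (inf (labs y) h) \<le> 0"
    using assms(1) by (simp only: ldisjoint_def)
  show "0 \<le> inf (inf (labs x) h) (inf (labs y) h)" using assms(2) by (simp add: labs_nonneg)
qed

theorem proposition4p3:
  fixes E :: "'a::banach_lattice set"
  assumes "subspace E"
    and "strongly_dispersed E"
  shows "strictly_dispersed E"
proof -
  obtain h \<epsilon> where hoc: "order_continuous h" and h0: "0 \<le> h" and "\<epsilon> > 0"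
    and avoid: "una_nbhd h \<epsilon> \<inter> unit_sphere_of E = {}"
    using assms(2) unfolding strongly_dispersed_def oc_part_def by blast
  define \<delta> where "\<delta> = min (\<epsilon> / 4) (1/2)"
  have False
    if "\<And>n. norm (f n) = 1" "\<And>n m. n \<noteq> m \<Longrightarrow> ldisjoint (f n) (f m)"
      "\<And>n. infdist (f n) E < \<delta>" for f :: "nat \<Rightarrow> 'a"
  proof -
    define g where "g n = inf (labs (f n)) h" for n
    have "\<epsilon> / 2 \<le> norm (g n)" for n
      unfolding g_def using that(1,3)
      by (rule norm_inf_labs_ge_if_near_dispersed[OF assms(1) avoid h0]) (simp_all add: \<delta>_def)
    moreover have "g \<longlonglongrightarrow> 0"
      using disjoint_order_interval_tendsto_0[OF hoc] ldisjoint_inf_labs[OF _ h0] that(2)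
      by (simp add: g_def labs_nonneg h0)
    then obtain N where "norm (g N) < \<epsilon> / 2"
      using LIMSEQ_D[of g 0 "\<epsilon> / 2"] \<open>\<epsilon> > 0\<close> by fastforce
    ultimately show False by (meson not_le)
  qed
  moreover have "\<delta> > 0" using \<open>\<epsilon> > 0\<close> by (simp add: \<delta>_def)
  ultimately show ?thesis unfolding strictly_dispersed_def by blast
qed

end
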